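(* Let $d, H, L$ be positive integers with $H$ dividing $d$, and let $\sigma>0$. Let $\bm e_1,\dots,\bm e_L \in \mathbb{R}^d$ be i.i.d. random vectors with distribution $N(0,I_d)$. For each head $h=1,\dots,H$, let $\bm W_v^{(h)} \in \mathbb{R}^{\frac{d}{H}\times d}$ be a random matrix, and let $\bm W_o \in \mathbb{R}^{d\times d}$ be a random matrix, where all entries of all these matrices are i.i.d. $N(0,\sigma^2)$ and independent of $\bm e_1,\dots,\bm e_L$. Set $\bm v_n^{(h)} = \bm W_v^{(h)} \bm e_n$. Assume the causal attention weights are uniform, i.e. for $1\le m\le L$ and every head $h$, $a_{mn}^{(h)} = \frac{1}{m}$ for $1\le n\le m$ and $a_{mn}^{(h)}=0$ for $n>m$. Define $$\bm o_m = \bm W_o\Big(\oplus_{h=1}^H \sum_{n=1}^L a_{mn}^{(h)} \bm v_n^{(h)}\Big),$$ where $\oplus$ denotes concatenation of the $H$ vectors in $\mathbb{R}^{d/H}$ into a vector in $\mathbb{R}^d$. Then for every $1\le m\le L$, $\bm o_m$ has mean zero and covariance matrix $\frac{d^2\sigma^4}{m} I_d$.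
   Context: This models the output at position $m$ of the multi-head causal self-attention module in the first layer of a randomly initialized transformer language model without positional embeddings, under the approximation that attention weights are evenly distributed over the visible positions $1,\dots,m$. $I_d$ is the $d\times d$ identity matrix. *)

theory Defs
  imports "HOL-Probability.Probability"
begin

text \<open>Indices of all Gaussian scalar random variables of the model:
  Emb n l   : component l (0 \<le> l < d) of the embedding e_n (1 \<le> n \<le> L);
  Wv h k l  : entry (k,l) of W_v^(h) (1 \<le> h \<le> H, 0 \<le> k < d/H, 0 \<le> l < d);
  Wo i j    : entry (i,j) of W_o (0 \<le> i, j < d).\<close>
datatype gidx = Emb nat nat | Wv nat nat nat | Wo nat nat

definition gauss_index_set :: "nat \<Rightarrow> nat \<Rightarrow> nat \<Rightarrow> gidx set" where
  "gauss_index_set d H L =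
     {Emb n l | n l. 1 \<le> n \<and> n \<le> L \<and> l < d}
   \<union> {Wv h k l | h k l. 1 \<le> h \<and> h \<le> H \<and> k < d div H \<and> l < d}
   \<union> {Wo i j | i j. i < d \<and> j < d}"

definition attn :: "nat \<Rightarrow> nat \<Rightarrow> real" where
  "attn m n = (if n \<le> m then 1 / real m else 0)"

definition value_vec :: "nat \<Rightarrow> (gidx \<Rightarrow> 'a \<Rightarrow> real) \<Rightarrow> nat \<Rightarrow> nat \<Rightarrow> nat \<Rightarrow> 'a \<Rightarrow> real" where
  "value_vec d X h n k \<omega> = (\<Sum>l<d. X (Wv h k l) \<omega> * X (Emb n l) \<omega>)"

text \<open>Component j (0 \<le> j < d) of the concatenation over heads h = 1..H of
  sum_{n=1}^L a_{mn}^(h) v_n^(h); head h occupies components (h-1)(d/H) .. h(d/H)-1.\<close>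
definition concat_heads :: "nat \<Rightarrow> nat \<Rightarrow> nat \<Rightarrow> (gidx \<Rightarrow> 'a \<Rightarrow> real) \<Rightarrow> nat \<Rightarrow> nat \<Rightarrow> 'a \<Rightarrow> real" where
  "concat_heads d H L X m j \<omega> =
     (\<Sum>n=1..L. attn m n * value_vec d X (j div (d div H) + 1) n (j mod (d div H)) \<omega>)"

definition attn_output :: "nat \<Rightarrow> nat \<Rightarrow> nat \<Rightarrow> (gidx \<Rightarrow> 'a \<Rightarrow> real) \<Rightarrow> nat \<Rightarrow> nat \<Rightarrow> 'a \<Rightarrow> real" where
  "attn_output d H L X m i \<omega> = (\<Sum>j<d. X (Wo i j) \<omega> * concat_heads d H L X m j \<omega>)"

end

(* Multiplying out W_o, the concatenation and W_v writes each coordinate o_m[i] as the linear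
   combination  sum_{n,j,l} a_{mn} W_o[i,j] W_v[j,l] e_n[l]  of cubic monomials in independent
   centred Gaussians, one factor from each of W_o, W_v and the embeddings.  Each monomial has
   mean zero; two distinct monomials are orthogonal, since their product contains some variable
   exactly once, while a monomial has second moment sigma^4.  Hence
   E[o_m[i] o_m[i']] = delta_{i i'} sigma^4 sum_{n,j,l} a_{mn}^2 = delta_{i i'} d^2 sigma^4 / m. *)

theory Submission
  imports Defs
begin

context prob_space
begin

lemma normal_distributed_power_integrable:
  assumes "distributed M lborel Y (normal_density 0 s)" and "0 < s"
  shows "integrable M (\<lambda>\<omega>. Y \<omega> ^ k)"
  using distributed_integrable[OF assms(1), of "\<lambda>x. x ^ k"] integrable_normal_moment[of s 0 k] assms(2)
  by simp

lemma indep_vars_prod_mset: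
  fixes X :: "'i \<Rightarrow> 'a \<Rightarrow> real"
  assumes indep: "indep_vars (\<lambda>_. borel) X I" and G: "set_mset G \<subseteq> I"
    and int: "\<And>g k. g \<in> I \<Longrightarrow> integrable M (\<lambda>\<omega>. X g \<omega> ^ k)"
  shows "integrable M (\<lambda>\<omega>. \<Prod>g\<in>#G. X g \<omega>)"
    and "expectation (\<lambda>\<omega>. \<Prod>g\<in>#G. X g \<omega>)
           = (\<Prod>g\<in>set_mset G. expectation (\<lambda>\<omega>. X g \<omega> ^ count G g))"
proof -
  have eq: "(\<lambda>\<omega>. \<Prod>g\<in>#G. X g \<omega>) = (\<lambda>\<omega>. \<Prod>g\<in>set_mset G. X g \<omega> ^ count G g)"
    by (simp add: image_prod_mset_multiplicity)
  have powers_indep: "indep_vars (\<lambda>_. borel) (\<lambda>g \<omega>. X g \<omega> ^ count G g) (set_mset G)"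
    using indep_vars_compose2[OF indep_vars_subset[OF indep G], of "\<lambda>g x. x ^ count G g"]
    by simp
  show "integrable M (\<lambda>\<omega>. \<Prod>g\<in>#G. X g \<omega>)"
    unfolding eq by (rule indep_vars_integrable[OF _ powers_indep]) (use G int in auto)
  show "expectation (\<lambda>\<omega>. \<Prod>g\<in>#G. X g \<omega>)
          = (\<Prod>g\<in>set_mset G. expectation (\<lambda>\<omega>. X g \<omega> ^ count G g))"
    unfolding eq by (rule indep_vars_lebesgue_integral[OF _ powers_indep]) (use G int in auto)
qed

lemma expectation_prod_mset_disjoint_union:
  fixes X :: "'i \<Rightarrow> 'a \<Rightarrow> real"
  assumes indep: "indep_vars (\<lambda>_. borel) X I" and G: "set_mset (F + G) \<subseteq> I"
    and int: "\<And>g k. g \<in> I \<Longrightarrow> integrable M (\<lambda>\<omega>. X g \<omega> ^ k)"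
    and disj: "set_mset F \<inter> set_mset G = {}"
  shows "expectation (\<lambda>\<omega>. \<Prod>g\<in>#F + G. X g \<omega>)
           = expectation (\<lambda>\<omega>. \<Prod>g\<in>#F. X g \<omega>) * expectation (\<lambda>\<omega>. \<Prod>g\<in>#G. X g \<omega>)"
proof -
  have count_F: "count (F + G) g = count F g" if "g \<in># F" for g
    using that disj by (auto simp: count_eq_zero_iff)
  have count_G: "count (F + G) g = count G g" if "g \<in># G" for g
    using that disj by (auto simp: count_eq_zero_iff)
  have "(\<Prod>g\<in>set_mset (F + G). expectation (\<lambda>\<omega>. X g \<omega> ^ count (F + G) g))
      = (\<Prod>g\<in>set_mset F. expectation (\<lambda>\<omega>. X g \<omega> ^ count F g))
        * (\<Prod>g\<in>set_mset G. expectation (\<lambda>\<omega>. X g \<omega> ^ count G g))"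
    using disj count_F count_G by (simp add: prod.union_disjoint cong: prod.cong)
  moreover have "set_mset F \<subseteq> I" "set_mset G \<subseteq> I"
    using G by auto
  ultimately show ?thesis
    using G by (simp only: indep_vars_prod_mset(2)[OF indep _ int])
qed

lemma expectation_mult_indep_centered:
  fixes X :: "'i \<Rightarrow> 'a \<Rightarrow> real"
  assumes indep: "indep_vars (\<lambda>_. borel) X I" and "g \<in> I" "g' \<in> I"
    and int: "\<And>g k. g \<in> I \<Longrightarrow> integrable M (\<lambda>\<omega>. X g \<omega> ^ k)"
    and centered: "\<And>g. g \<in> I \<Longrightarrow> expectation (X g) = 0"
  shows "expectation (\<lambda>\<omega>. X g \<omega> * X g' \<omega>)
           = (if g = g' then expectation (\<lambda>\<omega>. X g \<omega> ^ 2) else 0)"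
  using indep_vars_prod_mset(2)[OF indep _ int, of "{#g, g'#}"] assms(2,3) centered
  by (auto simp: power2_eq_square)

lemma expectation_sum_mult_sum_orthogonal:
  fixes Y Z :: "'p \<Rightarrow> 'a \<Rightarrow> real"
  assumes "finite S"
    and int: "\<And>p p'. p \<in> S \<Longrightarrow> p' \<in> S \<Longrightarrow> integrable M (\<lambda>\<omega>. Y p \<omega> * Z p' \<omega>)"
    and orth: "\<And>p p'. p \<in> S \<Longrightarrow> p' \<in> S \<Longrightarrow>
                 expectation (\<lambda>\<omega>. Y p \<omega> * Z p' \<omega>) = (if p = p' then v else 0)"
  shows "integrable M (\<lambda>\<omega>. (\<Sum>p\<in>S. c p * Y p \<omega>) * (\<Sum>p\<in>S. c' p * Z p \<omega>))"
    and "expectation (\<lambda>\<omega>. (\<Sum>p\<in>S. c p * Y p \<omega>) * (\<Sum>p\<in>S. c' p * Z p \<omega>))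
           = v * (\<Sum>p\<in>S. c p * c' p)"
proof -
  have eq: "(\<lambda>\<omega>. (\<Sum>p\<in>S. c p * Y p \<omega>) * (\<Sum>p\<in>S. c' p * Z p \<omega>))
          = (\<lambda>\<omega>. \<Sum>p\<in>S. \<Sum>p'\<in>S. c p * c' p' * (Y p \<omega> * Z p' \<omega>))"
    by (simp add: sum_product mult_ac)
  show "integrable M (\<lambda>\<omega>. (\<Sum>p\<in>S. c p * Y p \<omega>) * (\<Sum>p\<in>S. c' p * Z p \<omega>))"
    unfolding eq using int by (auto intro!: Bochner_Integration.integrable_sum integrable_mult_right)
  have "expectation (\<lambda>\<omega>. \<Sum>p\<in>S. \<Sum>p'\<in>S. c p * c' p' * (Y p \<omega> * Z p' \<omega>))
      = (\<Sum>p\<in>S. \<Sum>p'\<in>S. c p * c' p' * (if p = p' then v else 0))"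
    using int orth
    by (simp add: Bochner_Integration.integral_sum Bochner_Integration.integrable_sum)
  also have "\<dots> = v * (\<Sum>p\<in>S. c p * c' p)"
    using \<open>finite S\<close> by (simp add: if_distrib sum_distrib_left mult_ac cong: if_cong)
  finally show "expectation (\<lambda>\<omega>. (\<Sum>p\<in>S. c p * Y p \<omega>) * (\<Sum>p\<in>S. c' p * Z p \<omega>))
      = v * (\<Sum>p\<in>S. c p * c' p)"
    unfolding eq .
qed

end

definition concat_wv :: "nat \<Rightarrow> nat \<Rightarrow> nat \<Rightarrow> nat \<Rightarrow> gidx" where
  "concat_wv d H j l = Wv (j div (d div H) + 1) (j mod (d div H)) l"

definition output_monomial ::
    "nat \<Rightarrow> nat \<Rightarrow> (gidx \<Rightarrow> 'a \<Rightarrow> real) \<Rightarrow> nat \<Rightarrow> nat \<times> nat \<times> nat \<Rightarrow> 'a \<Rightarrow> real" where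
  "output_monomial d H X i = (\<lambda>(n, j, l) \<omega>.
     X (Wo i j) \<omega> * X (concat_wv d H j l) \<omega> * X (Emb n l) \<omega>)"

lemma attn_output_eq_sum_output_monomial:
  "attn_output d H L X m i
     = (\<lambda>\<omega>. \<Sum>p\<in>{1..L} \<times> {..<d} \<times> {..<d}. attn m (fst p) * output_monomial d H X i p \<omega>)"
proof
  fix \<omega>
  have "attn_output d H L X m i \<omega> = (\<Sum>j<d. \<Sum>n=1..L. \<Sum>l<d. attn m n *
     (X (Wo i j) \<omega> * X (concat_wv d H j l) \<omega> * X (Emb n l) \<omega>))"
    unfolding attn_output_def concat_heads_def value_vec_def concat_wv_def
    by (simp add: sum_distrib_left mult_ac)
  also have "\<dots> = (\<Sum>n=1..L. \<Sum>j<d. \<Sum>l<d. attn m n *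
     (X (Wo i j) \<omega> * X (concat_wv d H j l) \<omega> * X (Emb n l) \<omega>))"
    by (rule sum.swap)
  also have "\<dots> = (\<Sum>p\<in>{1..L} \<times> {..<d} \<times> {..<d}. attn m (fst p) * output_monomial d H X i p \<omega>)"
    by (simp add: sum.cartesian_product output_monomial_def case_prod_beta)
  finally show "attn_output d H L X m i \<omega> = \<dots>" .
qed

lemma sum_attn_squared:
  assumes "1 \<le> m" "m \<le> L"
  shows "(\<Sum>n=1..L. attn m n ^ 2) = 1 / real m"
proof -
  have "(\<Sum>n=1..L. attn m n ^ 2) = (\<Sum>n\<in>{1..L}. if n \<le> m then (1 / real m) ^ 2 else 0)"
    by (rule sum.cong) (auto simp: attn_def)
  also have "\<dots> = (\<Sum>n\<in>{n\<in>{1..L}. n \<le> m}. (1 / real m) ^ 2)"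
    by (rule sum.inter_filter[symmetric]) simp
  also have "{n\<in>{1..L}. n \<le> m} = {1..m}"
    using assms by auto
  finally show ?thesis
    using assms by (simp add: power2_eq_square)
qed

locale attention_model = prob_space +
  fixes X :: "gidx \<Rightarrow> 'a \<Rightarrow> real" and d H L :: nat and \<sigma> :: real
  assumes d_pos: "0 < d" and H_pos: "0 < H" and H_dvd_d: "H dvd d" and \<sigma>_pos: "0 < \<sigma>"
    and indep: "indep_vars (\<lambda>_. borel) X (gauss_index_set d H L)"
    and emb: "\<And>n l. 1 \<le> n \<Longrightarrow> n \<le> L \<Longrightarrow> l < d \<Longrightarrow>
               distributed M lborel (X (Emb n l)) (normal_density 0 1)"
    and wv: "\<And>h k l. 1 \<le> h \<Longrightarrow> h \<le> H \<Longrightarrow> k < d div H \<Longrightarrow> l < d \<Longrightarrow>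
               distributed M lborel (X (Wv h k l)) (normal_density 0 \<sigma>)"
    and wo: "\<And>i j. i < d \<Longrightarrow> j < d \<Longrightarrow>
               distributed M lborel (X (Wo i j)) (normal_density 0 \<sigma>)"
begin

definition gauss_std :: "gidx \<Rightarrow> real" where
  "gauss_std g = (case g of Emb _ _ \<Rightarrow> 1 | _ \<Rightarrow> \<sigma>)"

lemma distributed_gauss_index:
  assumes "g \<in> gauss_index_set d H L"
  shows "distributed M lborel (X g) (normal_density 0 (gauss_std g))"
  using assms emb wv wo unfolding gauss_index_set_def gauss_std_def by auto

lemma gauss_std_pos: "0 < gauss_std g"
  using \<sigma>_pos by (simp add: gauss_std_def split: gidx.split)

lemma integrable_gauss_power:
  "g \<in> gauss_index_set d H L \<Longrightarrow> integrable M (\<lambda>\<omega>. X g \<omega> ^ k)"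
  using normal_distributed_power_integrable[OF distributed_gauss_index gauss_std_pos] .

lemma expectation_gauss:
  "g \<in> gauss_index_set d H L \<Longrightarrow> expectation (X g) = 0"
  using normal_distributed_expectation[OF gauss_std_pos distributed_gauss_index] .

lemma expectation_gauss_mult:
  assumes "g \<in> gauss_index_set d H L" "g' \<in> gauss_index_set d H L"
  shows "expectation (\<lambda>\<omega>. X g \<omega> * X g' \<omega>) = (if g = g' then gauss_std g ^ 2 else 0)"
  using expectation_mult_indep_centered[OF indep assms integrable_gauss_power expectation_gauss]
    normal_distributed_variance[OF gauss_std_pos distributed_gauss_index[OF assms(1)]]
    expectation_gauss[OF assms(1)]
  by auto

lemma output_monomial_factors_in_gauss_index_set:
  assumes "i < d" "(n, j, l) \<in> {1..L} \<times> {..<d} \<times> {..<d}"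
  shows "Wo i j \<in> gauss_index_set d H L"
    and "concat_wv d H j l \<in> gauss_index_set d H L"
    and "Emb n l \<in> gauss_index_set d H L"
proof -
  have "0 < d div H" and "d = H * (d div H)"
    using d_pos H_pos H_dvd_d by (auto elim!: dvdE)
  then have "j div (d div H) < H" and "j mod (d div H) < d div H"
    using assms(2) by (auto simp: div_less_iff_less_mult mult.commute)
  then show "Wo i j \<in> gauss_index_set d H L"
    and "concat_wv d H j l \<in> gauss_index_set d H L"
    and "Emb n l \<in> gauss_index_set d H L"
    using assms unfolding gauss_index_set_def concat_wv_def by auto
qed

lemma output_monomial_centered:
  assumes "i < d" "p \<in> {1..L} \<times> {..<d} \<times> {..<d}"
  shows "integrable M (output_monomial d H X i p)"
    and "expectation (output_monomial d H X i p) = 0"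
proof -
  obtain n j l where p: "p = (n, j, l)"
    by (cases p)
  define a b e where "a = Wo i j" and "b = concat_wv d H j l"
    and "e = Emb n l"
  define G where "G = {#a, b, e#}"
  have G_sub: "set_mset G \<subseteq> gauss_index_set d H L"
    using output_monomial_factors_in_gauss_index_set[OF assms(1) assms(2)[unfolded p]]
    by (simp add: G_def a_def b_def e_def)
  have eq: "output_monomial d H X i p = (\<lambda>\<omega>. \<Prod>g\<in>#G. X g \<omega>)"
    by (simp add: p G_def a_def b_def e_def output_monomial_def mult_ac)
  show "integrable M (output_monomial d H X i p)"
    unfolding eq by (rule indep_vars_prod_mset(1)[OF indep G_sub integrable_gauss_power])
  have "expectation (output_monomial d H X i p)
      = (\<Prod>g\<in>set_mset G. expectation (\<lambda>\<omega>. X g \<omega> ^ count G g))"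
    unfolding eq by (rule indep_vars_prod_mset(2)[OF indep G_sub integrable_gauss_power])
  also have "\<dots> = 0"
  proof (rule prod_zero)
    have "count G a = 1"
      by (simp add: G_def a_def b_def e_def concat_wv_def)
    then show "\<exists>g\<in>set_mset G. expectation (\<lambda>\<omega>. X g \<omega> ^ count G g) = 0"
      using expectation_gauss G_sub by (auto simp: G_def)
  qed simp
  finally show "expectation (output_monomial d H X i p) = 0" .
qed

lemma output_monomial_orthogonal:
  assumes "i < d" "p \<in> {1..L} \<times> {..<d} \<times> {..<d}"
    and "i' < d" "p' \<in> {1..L} \<times> {..<d} \<times> {..<d}"
  shows "integrable M (\<lambda>\<omega>. output_monomial d H X i p \<omega> * output_monomial d H X i' p' \<omega>)"
    and "expectation (\<lambda>\<omega>. output_monomial d H X i p \<omega> * output_monomial d H X i' p' \<omega>)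
           = (if (i, p) = (i', p') then \<sigma> ^ 4 else 0)"
proof -
  obtain n j l where p: "p = (n, j, l)"
    by (cases p)
  obtain n' j' l' where p': "p' = (n', j', l')"
    by (cases p')
  define a b e where "a = Wo i j" and "b = concat_wv d H j l"
    and "e = Emb n l"
  define a' b' e' where "a' = Wo i' j'" and "b' = concat_wv d H j' l'"
    and "e' = Emb n' l'"
  note factors = output_monomial_factors_in_gauss_index_set
  have in_I: "a \<in> gauss_index_set d H L" "b \<in> gauss_index_set d H L" "e \<in> gauss_index_set d H L"
    "a' \<in> gauss_index_set d H L" "b' \<in> gauss_index_set d H L" "e' \<in> gauss_index_set d H L"
    using factors[OF assms(1,2)[unfolded p]] factors[OF assms(3,4)[unfolded p']]
    by (simp_all add: a_def b_def e_def a'_def b'_def e'_def)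
  define G where "G = {#a, a'#} + {#b, b'#} + {#e, e'#}"
  have G_sub: "set_mset G \<subseteq> gauss_index_set d H L"
    using in_I by (simp add: G_def)
  have eq: "(\<lambda>\<omega>. output_monomial d H X i p \<omega> * output_monomial d H X i' p' \<omega>)
      = (\<lambda>\<omega>. \<Prod>g\<in>#G. X g \<omega>)"
    by (simp add: p p' G_def a_def b_def e_def a'_def b'_def e'_def output_monomial_def mult_ac)
  show "integrable M (\<lambda>\<omega>. output_monomial d H X i p \<omega> * output_monomial d H X i' p' \<omega>)"
    unfolding eq by (rule indep_vars_prod_mset(1)[OF indep G_sub integrable_gauss_power])
  \<comment> \<open>The pairs from W_o, W_v and the embeddings have disjoint supports, so the moment factorises.\<close>
  note moment_split = expectation_prod_mset_disjoint_union[OF indep _ integrable_gauss_power]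
  have "expectation (\<lambda>\<omega>. \<Prod>g\<in>#G. X g \<omega>)
      = expectation (\<lambda>\<omega>. \<Prod>g\<in>#{#a, a'#} + {#b, b'#}. X g \<omega>)
        * expectation (\<lambda>\<omega>. \<Prod>g\<in>#{#e, e'#}. X g \<omega>)"
    using in_I unfolding G_def
    by (intro moment_split) (auto simp: a_def b_def e_def a'_def b'_def e'_def concat_wv_def)
  also have "\<dots> = expectation (\<lambda>\<omega>. X a \<omega> * X a' \<omega>) * expectation (\<lambda>\<omega>. X b \<omega> * X b' \<omega>)
        * expectation (\<lambda>\<omega>. X e \<omega> * X e' \<omega>)"
    using in_I
    by (subst moment_split) (auto simp: a_def b_def e_def a'_def b'_def e'_def concat_wv_def)
  also have "\<dots> = (if a = a' then \<sigma>\<^sup>2 else 0) * (if b = b' then \<sigma>\<^sup>2 else 0) * (if e = e' then 1 else 0)"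
  proof -
    have "gauss_std a = \<sigma>" "gauss_std b = \<sigma>" "gauss_std e = 1"
      by (simp_all add: gauss_std_def a_def b_def e_def concat_wv_def)
    then show ?thesis
      using in_I by (auto simp: expectation_gauss_mult)
  qed
  also have "\<dots> = (if (i, p) = (i', p') then \<sigma> ^ 4 else 0)"
    by (auto simp: p p' a_def b_def e_def a'_def b'_def e'_def)
  finally show "expectation (\<lambda>\<omega>. output_monomial d H X i p \<omega> * output_monomial d H X i' p' \<omega>)
      = (if (i, p) = (i', p') then \<sigma> ^ 4 else 0)"
    unfolding eq .
qed

lemma attn_output_centered:
  assumes "i < d"
  shows "integrable M (attn_output d H L X m i)"
    and "expectation (attn_output d H L X m i) = 0"
  using output_monomial_centered[OF assms]
  by (simp_all add: attn_output_eq_sum_output_monomial)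

lemma attn_output_second_moment:
  assumes "1 \<le> m" "m \<le> L" "i < d" "i' < d"
  shows "integrable M (\<lambda>\<omega>. attn_output d H L X m i \<omega> * attn_output d H L X m i' \<omega>)"
    and "expectation (\<lambda>\<omega>. attn_output d H L X m i \<omega> * attn_output d H L X m i' \<omega>)
           = (if i = i' then (real d)\<^sup>2 * \<sigma> ^ 4 / real m else 0)"
proof -
  let ?S = "{1..L} \<times> {..<d} \<times> {..<d}"
  have orth: "expectation (\<lambda>\<omega>. output_monomial d H X i p \<omega> * output_monomial d H X i' p' \<omega>)
      = (if p = p' then if i = i' then \<sigma> ^ 4 else 0 else 0)" if "p \<in> ?S" "p' \<in> ?S" for p p'
    using output_monomial_orthogonal(2)[OF assms(3) that(1) assms(4) that(2)] by auto
  let ?o = "\<lambda>i \<omega>. \<Sum>p\<in>?S. attn m (fst p) * output_monomial d H X i p \<omega>"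
  have lincomb: "integrable M (\<lambda>\<omega>. ?o i \<omega> * ?o i' \<omega>)"
    "expectation (\<lambda>\<omega>. ?o i \<omega> * ?o i' \<omega>)
       = (if i = i' then \<sigma> ^ 4 else 0) * (\<Sum>p\<in>?S. attn m (fst p) * attn m (fst p))"
    using expectation_sum_mult_sum_orthogonal[OF _ output_monomial_orthogonal(1)[OF assms(3) _ assms(4)] orth]
    by auto
  have "(\<Sum>p\<in>?S. attn m (fst p) * attn m (fst p)) = real d * (real d * (\<Sum>n=1..L. attn m n ^ 2))"
    by (simp add: sum.cartesian_product' power2_eq_square sum_distrib_left mult_ac)
  also have "\<dots> = (real d)\<^sup>2 / real m"
    using sum_attn_squared[OF assms(1,2)] by (simp add: power2_eq_square)
  finally show "integrable M (\<lambda>\<omega>. attn_output d H L X m i \<omega> * attn_output d H L X m i' \<omega>)"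
    and "expectation (\<lambda>\<omega>. attn_output d H L X m i \<omega> * attn_output d H L X m i' \<omega>)
           = (if i = i' then (real d)\<^sup>2 * \<sigma> ^ 4 / real m else 0)"
    using lincomb by (simp_all add: attn_output_eq_sum_output_monomial)
qed

end

theorem lemma3:
  fixes M :: "'a measure" and X :: "gidx \<Rightarrow> 'a \<Rightarrow> real"
    and d H L :: nat and \<sigma> :: real
  assumes "prob_space M"
    and "d > 0" and "H > 0" and "L > 0" and "H dvd d" and "\<sigma> > 0"
    and indep: "prob_space.indep_vars M (\<lambda>_. borel) X (gauss_index_set d H L)"
    and emb: "\<And>n l. 1 \<le> n \<Longrightarrow> n \<le> L \<Longrightarrow> l < d \<Longrightarrow>
               distributed M lborel (X (Emb n l)) (normal_density 0 1)"
    and wv: "\<And>h k l. 1 \<le> h \<Longrightarrow> h \<le> H \<Longrightarrow> k < d div H \<Longrightarrow> l < d \<Longrightarrow>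
               distributed M lborel (X (Wv h k l)) (normal_density 0 \<sigma>)"
    and wo: "\<And>i j. i < d \<Longrightarrow> j < d \<Longrightarrow>
               distributed M lborel (X (Wo i j)) (normal_density 0 \<sigma>)"
    and m: "1 \<le> m" "m \<le> L"
  shows "(\<forall>i<d. integrable M (attn_output d H L X m i)
                 \<and> prob_space.expectation M (attn_output d H L X m i) = 0)
       \<and> (\<forall>i<d. \<forall>j<d.
            integrable M (\<lambda>\<omega>. (attn_output d H L X m i \<omega> - prob_space.expectation M (attn_output d H L X m i))
                             * (attn_output d H L X m j \<omega> - prob_space.expectation M (attn_output d H L X m j)))
          \<and> prob_space.expectation M
              (\<lambda>\<omega>. (attn_output d H L X m i \<omega> - prob_space.expectation M (attn_output d H L X m i))
                  * (attn_output d H L X m j \<omega> - prob_space.expectation M (attn_output d H L X m j)))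
            = (if i = j then (real d)^2 * \<sigma>^4 / real m else 0))"
proof -
  have "attention_model M X d H L \<sigma>"
    using assms unfolding attention_model_def attention_model_axioms_def by auto
  then interpret attention_model M X d H L \<sigma> .
  show ?thesis
    using attn_output_centered attn_output_second_moment[OF m] by simp
qed

end
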